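(* Let $(X,\mu)$ be a non-atomic probability measure space equipped with a tree $\mathcal{T}$, with associated dyadic maximal operator $\mathcal{M}_{\mathcal{T}}$. For every $q$ with $0<q<1$ and every $f,h$ with $0<h\le f^q$, $$\int_X(\mathcal{M}_{\mathcal{T}}\phi)^q\,d\mu\le h\,\omega_q\Big(\frac{f^q}{h}\Big)$$ for every $\phi\in L^1(X,\mu)$ with $\phi\ge0$, $\int_X\phi\,d\mu=f$, $\int_X\phi^q\,d\mu=h$.
   Context: A set $\mathcal{T}$ of measurable subsets of $X$ is a tree if: (i) $X\in\mathcal{T}$ and $\mu(I)>0$ for every $I\in\mathcal{T}$; (ii) for every $I\in\mathcal{T}$ there is a finite or countable set $C(I)\subseteq\mathcal{T}$ with at least two elements, consisting of pairwise disjoint subsets of $I$ whose union is $I$; (iii) $\mathcal{T}=\bigcup_{m\ge0}\mathcal{T}_{(m)}$ where $\mathcal{T}_{(0)}=\{X\}$ and $\mathcal{T}_{(m+1)}=\bigcup_{I\in\mathcal{T}_{(m)}}C(I)$; (iv) $\lim_{m\to\infty}\sup_{I\in\mathcal{T}_{(m)}}\mu(I)=0$. The dyadic maximal operator is $\mathcal{M}_{\mathcal{T}}\phi(x)=\sup\{\frac{1}{\mu(I)}\int_I|\phi|\,d\mu : x\in I\in\mathcal{T}\}$. Here $\omega_q(z)=[H_q^{-1}(z)]^q$ for $z\ge1$, where $H_q(z)=(1-q)z^q+qz^{q-1}$ on $[1,\infty)$ (a strictly increasing bijection onto $[1,\infty)$). *)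

theory Defs
  imports "HOL-Probability.Probability"
begin

definition non_atomic :: "'a measure \<Rightarrow> bool" where
  "non_atomic M \<longleftrightarrow> \<not> (\<exists>A\<in>sets M. emeasure M A > 0 \<and>
     (\<forall>B\<in>sets M. B \<subseteq> A \<longrightarrow> emeasure M B = 0 \<or> emeasure M (A - B) = 0))"

fun tree_level :: "('a set \<Rightarrow> 'a set set) \<Rightarrow> 'a set \<Rightarrow> nat \<Rightarrow> 'a set set" where
  "tree_level C X 0 = {X}"
| "tree_level C X (Suc m) = \<Union> (C ` tree_level C X m)"

definition is_tree :: "'a measure \<Rightarrow> 'a set set \<Rightarrow> bool" where
  "is_tree M T \<longleftrightarrow> (\<exists>C.
     space M \<in> T \<and> (\<forall>I\<in>T. I \<in> sets M \<and> measure M I > 0) \<and>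
     (\<forall>I\<in>T. C I \<subseteq> T \<and> countable (C I) \<and> (\<exists>J K. J \<in> C I \<and> K \<in> C I \<and> J \<noteq> K) \<and>
             disjoint (C I) \<and> (\<forall>J\<in>C I. J \<subseteq> I) \<and> \<Union> (C I) = I) \<and>
     T = (\<Union>m. tree_level C (space M) m) \<and>
     ((\<lambda>m. SUP I\<in>tree_level C (space M) m. measure M I) \<longlonglongrightarrow> 0))"

definition dyadic_max :: "'a measure \<Rightarrow> 'a set set \<Rightarrow> ('a \<Rightarrow> real) \<Rightarrow> 'a \<Rightarrow> ennreal" where
  "dyadic_max M T \<phi> x = (SUP I\<in>{I\<in>T. x \<in> I}.
      (\<integral>\<^sup>+ y. ennreal \<bar>\<phi> y\<bar> * indicator I y \<partial>M) / emeasure M I)"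

definition enn_powr :: "ennreal \<Rightarrow> real \<Rightarrow> ennreal" where
  "enn_powr a q = (if a = \<infinity> then \<infinity> else ennreal (enn2real a powr q))"

definition H_fun :: "real \<Rightarrow> real \<Rightarrow> real" where
  "H_fun q z = (1 - q) * z powr q + q * z powr (q - 1)"

definition omega :: "real \<Rightarrow> real \<Rightarrow> real" where
  "omega q z = (THE y. y \<ge> 1 \<and> H_fun q y = z) powr q"

end

(*
  Let g be the (a.e. finite) dyadic maximal function of \<phi>. Since the whole space is the root of
  the tree, g \<ge> f; a stopping-time decomposition of {g > t} into disjoint maximal tree sets gives
  the weak-type estimate t \<mu>{g > t} \<le> \<integral>{g > t} \<phi>. Inserted into the layer-cake formula for
  \<integral> g^q, it yields (1 - q) \<integral> g^q + q \<integral> \<phi> g^(q-1) \<le> f^q. Concavity of t^q gives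
  \<phi>^q \<le> (1 - q) (g/z)^q + q \<phi> (g/z)^(q-1) for every z > 0; integrating with z^q = \<integral> g^q / h
  turns the two inequalities into h H_q(z) \<le> f^q, i.e. z \<le> H_q^{-1}(f^q / h), which is
  \<integral> g^q = h z^q \<le> h \<omega>_q(f^q / h).
*)

theory Submission
  imports Defs
begin

lemma tree_level_countable:
  assumes "\<And>I k. I \<in> tree_level C X k \<Longrightarrow> countable (C I)"
  shows "countable (tree_level C X k)"
  using assms by (induction k) auto

lemma tree_level_refines:
  assumes children_sub: "\<And>I k J. I \<in> tree_level C X k \<Longrightarrow> J \<in> C I \<Longrightarrow> J \<subseteq> I"
    and "i \<le> j" "J \<in> tree_level C X j"
  shows "\<exists>K\<in>tree_level C X i. J \<subseteq> K"
  using assms(2,3)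
proof (induction j arbitrary: J)
  case (Suc j)
  show ?case
  proof (cases "i = Suc j")
    case False
    with Suc.prems obtain I where I: "I \<in> tree_level C X j" "J \<in> C I" and "i \<le> j" by auto
    then obtain K where "K \<in> tree_level C X i" "I \<subseteq> K" using Suc.IH by blast
    moreover have "J \<subseteq> I" using children_sub[OF I] .
    ultimately show ?thesis by blast
  qed (use Suc.prems in blast)
qed simp

lemma tree_level_disjoint:
  assumes children: "\<And>I k. I \<in> tree_level C X k \<Longrightarrow> disjoint (C I) \<and> (\<forall>J\<in>C I. J \<subseteq> I)"
    and "I \<in> tree_level C X k" "J \<in> tree_level C X k"
  shows "I = J \<or> I \<inter> J = {}"
  using assms(2,3)
proof (induction k arbitrary: I J)
  case (Suc k)
  then obtain I' J' where I': "I' \<in> tree_level C X k" "I \<in> C I'"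
    and J': "J' \<in> tree_level C X k" "J \<in> C J'" by auto
  have "I \<subseteq> I'" "J \<subseteq> J'" using children I' J' by blast+
  from Suc.IH[OF I'(1) J'(1)] show ?case
  proof
    assume "I' = J'"
    then show ?thesis using children[OF I'(1)] I' J' unfolding disjoint_def by blast
  next
    assume "I' \<inter> J' = {}"
    then show ?thesis using \<open>I \<subseteq> I'\<close> \<open>J \<subseteq> J'\<close> by blast
  qed
qed simp

text \<open>Stopping-time selection: keep the members of \<open>G\<close> that meet no member of \<open>G\<close>
  on an earlier level.\<close>
lemma tree_level_disjoint_subcover:
  assumes children: "\<And>I k. I \<in> tree_level C X k \<Longrightarrow> disjoint (C I) \<and> (\<forall>J\<in>C I. J \<subseteq> I)"
    and G: "G \<subseteq> (\<Union>k. tree_level C X k)"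
  shows "\<exists>S\<subseteq>G. disjoint S \<and> \<Union>S = \<Union>G"
proof -
  define Gk where "Gk k = G \<inter> tree_level C X k" for k
  define S where "S = (\<Union>k. {I\<in>Gk k. \<forall>j<k. \<forall>K\<in>Gk j. I \<inter> K = {}})"
  have sub: "J \<subseteq> I" if "I \<in> tree_level C X k" "J \<in> C I" for I J k
    using children[OF that(1)] that(2) by blast
  have level_disj: "I = J \<or> I \<inter> J = {}" if "I \<in> tree_level C X k" "J \<in> tree_level C X k" for I J k
    using tree_level_disjoint[OF children that] .
  have "disjoint S"
  proof (rule disjointI)
    fix I J assume "I \<in> S" "J \<in> S" "I \<noteq> J"
    then obtain k k' where "I \<in> Gk k" "\<forall>j<k. \<forall>K\<in>Gk j. I \<inter> K = {}"
      and "J \<in> Gk k'" "\<forall>j<k'. \<forall>K\<in>Gk j. J \<inter> K = {}"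
      unfolding S_def by blast
    then show "I \<inter> J = {}"
      using level_disj \<open>I \<noteq> J\<close> unfolding Gk_def by (cases k k' rule: linorder_cases) blast+
  qed
  moreover have "\<Union>G \<subseteq> \<Union>S"
  proof
    fix x assume "x \<in> \<Union>G"
    then have ex: "\<exists>k. \<exists>I\<in>Gk k. x \<in> I" using G unfolding Gk_def by blast
    define k where "k = (LEAST k. \<exists>I\<in>Gk k. x \<in> I)"
    obtain I where I: "I \<in> Gk k" "x \<in> I" using LeastI_ex[OF ex] unfolding k_def by blast
    have "I \<inter> K = {}" if "j < k" "K \<in> Gk j" for j K
    proof (rule ccontr)
      assume "I \<inter> K \<noteq> {}"
      have "\<exists>K'\<in>tree_level C X j. I \<subseteq> K'"
        by (rule tree_level_refines[OF sub, where i=j and j=k]) (use \<open>j < k\<close> I in \<open>auto simp: Gk_def\<close>)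
      then obtain K' where "K' \<in> tree_level C X j" "I \<subseteq> K'" ..
      moreover have "K \<in> tree_level C X j" using \<open>K \<in> Gk j\<close> unfolding Gk_def by blast
      ultimately have "x \<in> K"
        using level_disj[of K' j K] \<open>I \<inter> K \<noteq> {}\<close> I(2) by blast
      with \<open>K \<in> Gk j\<close> have "k \<le> j" unfolding k_def by (blast intro: Least_le)
      with \<open>j < k\<close> show False by simp
    qed
    with I show "x \<in> \<Union>S" unfolding S_def by blast
  qed
  moreover have "S \<subseteq> G" unfolding S_def Gk_def by blast
  ultimately show ?thesis by blast
qed

lemma is_treeE:
  assumes "is_tree M T"
  obtains C where "T = (\<Union>k. tree_level C (space M) k)"
    and "\<And>I. I \<in> T \<Longrightarrow> countable (C I) \<and> disjoint (C I) \<and> (\<forall>J\<in>C I. J \<subseteq> I)"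
  using assms unfolding is_tree_def by metis

lemma is_tree_countable:
  assumes "is_tree M T"
  shows "countable T"
proof -
  obtain C where T: "T = (\<Union>k. tree_level C (space M) k)"
    and C: "\<And>I. I \<in> T \<Longrightarrow> countable (C I)"
    using is_treeE[OF assms] by metis
  have "countable (tree_level C (space M) k)" for k
    by (rule tree_level_countable) (use C T in blast)
  then show ?thesis unfolding T by blast
qed

lemma is_tree_disjoint_subcover:
  assumes "is_tree M T" "G \<subseteq> T"
  obtains S where "S \<subseteq> G" "disjoint S" "\<Union>S = \<Union>G"
proof -
  obtain C where T: "T = (\<Union>k. tree_level C (space M) k)"
    and C: "\<And>I. I \<in> T \<Longrightarrow> disjoint (C I) \<and> (\<forall>J\<in>C I. J \<subseteq> I)"
    using is_treeE[OF assms(1)] by metis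
  have "\<exists>S\<subseteq>G. disjoint S \<and> \<Union>S = \<Union>G"
    by (rule tree_level_disjoint_subcover[of C "space M"]) (use C T assms(2) in blast)+
  then show ?thesis using that by blast
qed

lemma is_tree_sets: "is_tree M T \<Longrightarrow> I \<in> T \<Longrightarrow> I \<in> sets M \<and> measure M I > 0"
  unfolding is_tree_def by (elim exE conjE) auto

lemma is_tree_space: "is_tree M T \<Longrightarrow> space M \<in> T"
  unfolding is_tree_def by (elim exE conjE)

definition avg_abs :: "'a measure \<Rightarrow> ('a \<Rightarrow> real) \<Rightarrow> 'a set \<Rightarrow> ennreal" where
  "avg_abs M \<phi> I = (\<integral>\<^sup>+ y. ennreal \<bar>\<phi> y\<bar> * indicator I y \<partial>M) / emeasure M I"

lemma dyadic_max_avg_abs: "dyadic_max M T \<phi> x = (SUP I\<in>{I\<in>T. x \<in> I}. avg_abs M \<phi> I)"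
  by (simp add: dyadic_max_def avg_abs_def)

lemma avg_abs_le_dyadic_max: "I \<in> T \<Longrightarrow> x \<in> I \<Longrightarrow> avg_abs M \<phi> I \<le> dyadic_max M T \<phi> x"
  unfolding dyadic_max_avg_abs by (auto intro: SUP_upper)

lemma dyadic_max_eq_SUP_indicator:
  "dyadic_max M T \<phi> x = (SUP I\<in>T. avg_abs M \<phi> I * indicator I x)"
  unfolding dyadic_max_avg_abs
proof (rule antisym)
  show "(SUP I\<in>{I \<in> T. x \<in> I}. avg_abs M \<phi> I) \<le> (SUP I\<in>T. avg_abs M \<phi> I * indicator I x)"
    by (rule SUP_mono) (auto intro!: bexI)
  show "(SUP I\<in>T. avg_abs M \<phi> I * indicator I x) \<le> (SUP I\<in>{I \<in> T. x \<in> I}. avg_abs M \<phi> I)"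
    by (rule SUP_least) (auto intro: SUP_upper split: split_indicator)
qed

lemma borel_measurable_dyadic_max:
  assumes "countable T" "T \<subseteq> sets M"
  shows "dyadic_max M T \<phi> \<in> borel_measurable M"
  unfolding dyadic_max_eq_SUP_indicator[abs_def]
  using assms by (intro borel_measurable_SUP) auto

lemma is_tree_borel_measurable_dyadic_max:
  assumes "is_tree M T"
  shows "dyadic_max M T \<phi> \<in> borel_measurable M"
  by (rule borel_measurable_dyadic_max[OF is_tree_countable[OF assms]]) (use is_tree_sets[OF assms] in blast)

lemma nn_integral_abs_le_dyadic_max:
  assumes "prob_space M" "space M \<in> T" "x \<in> space M"
  shows "(\<integral>\<^sup>+ y. ennreal \<bar>\<phi> y\<bar> \<partial>M) \<le> dyadic_max M T \<phi> x"
proof -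
  have "avg_abs M \<phi> (space M) = (\<integral>\<^sup>+ y. ennreal \<bar>\<phi> y\<bar> \<partial>M)"
    using prob_space.emeasure_space_1[OF assms(1)]
    by (simp add: avg_abs_def divide_ennreal_def nn_integral_cong[of M "\<lambda>y. ennreal \<bar>\<phi> y\<bar> * indicator (space M) y"])
  then show ?thesis using avg_abs_le_dyadic_max[OF assms(2,3), of M \<phi>] by simp
qed

lemma dyadic_max_level_set_decomposition:
  assumes tree: "is_tree M T"
  obtains S where "S \<subseteq> T" "countable S" "disjoint S" "\<And>I. I \<in> S \<Longrightarrow> t < avg_abs M \<phi> I"
    "{x\<in>space M. t < dyadic_max M T \<phi> x} = \<Union>S"
proof -
  define G where "G = {I\<in>T. t < avg_abs M \<phi> I}"
  have "G \<subseteq> T" unfolding G_def by blast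
  obtain S where S: "S \<subseteq> G" "disjoint S" "\<Union>S = \<Union>G"
    using is_tree_disjoint_subcover[OF tree \<open>G \<subseteq> T\<close>] .
  have "{x\<in>space M. t < dyadic_max M T \<phi> x} = \<Union>G"
  proof
    show "{x\<in>space M. t < dyadic_max M T \<phi> x} \<subseteq> \<Union>G"
      unfolding G_def dyadic_max_avg_abs by (auto simp: less_SUP_iff)
    show "\<Union>G \<subseteq> {x\<in>space M. t < dyadic_max M T \<phi> x}"
    proof
      fix x assume "x \<in> \<Union>G"
      then obtain I where "I \<in> T" "x \<in> I" "t < avg_abs M \<phi> I" unfolding G_def by blast
      moreover have "x \<in> space M"
        using is_tree_sets[OF tree \<open>I \<in> T\<close>] \<open>x \<in> I\<close> sets.sets_into_space by blast
      ultimately show "x \<in> {x\<in>space M. t < dyadic_max M T \<phi> x}"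
        using avg_abs_le_dyadic_max[of I T x M \<phi>] by (auto intro: less_le_trans)
    qed
  qed
  show ?thesis
  proof (rule that)
    show "S \<subseteq> T" using S(1) \<open>G \<subseteq> T\<close> by (rule order_trans)
    then show "countable S" by (rule countable_subset[OF _ is_tree_countable[OF tree]])
    show "t < avg_abs M \<phi> I" if "I \<in> S" for I using S(1) that unfolding G_def by blast
  qed (use S \<open>{x\<in>space M. t < dyadic_max M T \<phi> x} = \<Union>G\<close> in simp_all)
qed

lemma dyadic_max_weak_type:
  fixes t :: ennreal
  assumes tree: "is_tree M T" and [measurable]: "\<phi> \<in> borel_measurable M"
  defines "E \<equiv> {x\<in>space M. t < dyadic_max M T \<phi> x}"
  shows "t * emeasure M E \<le> (\<integral>\<^sup>+ x\<in>E. ennreal \<bar>\<phi> x\<bar> \<partial>M)"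
proof -
  obtain S where S: "S \<subseteq> T" "countable S" "disjoint S" "\<And>I. I \<in> S \<Longrightarrow> t < avg_abs M \<phi> I"
    and E: "E = \<Union>S"
    using dyadic_max_level_set_decomposition[OF tree] unfolding E_def by metis
  define N where "N = density M (\<lambda>x. ennreal \<bar>\<phi> x\<bar>)"
  have S_sets: "I \<in> sets M" if "I \<in> S" for I using is_tree_sets[OF tree] S(1) that by blast
  have "disjoint_family_on (\<lambda>I. I) S"
    using S(3) by (simp add: disjoint_family_on_def disjoint_def)
  then have emeasure_E: "emeasure K E = (\<integral>\<^sup>+ I. emeasure K I \<partial>count_space S)"
    if "sets K = sets M" for K
    unfolding E using emeasure_UN_countable[of S "\<lambda>I. I" K] S(2) S_sets that by simp
  have selected: "t * emeasure M I \<le> emeasure N I" if "I \<in> S" for I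
  proof -
    have "emeasure M I \<noteq> 0" "emeasure M I < \<top>"
      using is_tree_sets[OF tree, of I] S(1) that by (auto simp: measure_def enn2real_positive_iff)
    then show ?thesis
      unfolding N_def using S(4)[OF that] S_sets[OF that] unfolding avg_abs_def
      by (simp add: emeasure_density) (meson divide_less_ennreal le_less not_le top.extremum)
  qed
  have "t * emeasure M E = (\<integral>\<^sup>+ I. t * emeasure M I \<partial>count_space S)"
    by (simp add: emeasure_E nn_integral_cmult)
  also have "\<dots> \<le> (\<integral>\<^sup>+ I. emeasure N I \<partial>count_space S)"
    by (intro nn_integral_mono) (simp add: selected)
  also have "\<dots> = emeasure N E" by (simp add: emeasure_E N_def)
  also have "\<dots> = (\<integral>\<^sup>+ x\<in>E. ennreal \<bar>\<phi> x\<bar> \<partial>M)"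
    unfolding N_def E using S_sets S(2) by (intro emeasure_density) auto
  finally show ?thesis .
qed

lemma AE_finite_of_weak_type:
  fixes m :: "'a \<Rightarrow> ennreal"
  assumes [measurable]: "m \<in> borel_measurable M" and "c \<noteq> \<top>"
    and weak: "\<And>t::real. t > 0 \<Longrightarrow> ennreal t * emeasure M {x\<in>space M. ennreal t < m x} \<le> c"
  shows "AE x in M. m x \<noteq> \<top>"
proof -
  define E where "E = {x\<in>space M. m x = \<top>}"
  have [measurable]: "E \<in> sets M" unfolding E_def by measurable
  have bound: "ennreal t * emeasure M E \<le> c" if "t > 0" for t
  proof -
    have "emeasure M E \<le> emeasure M {x\<in>space M. ennreal t < m x}"
      by (rule emeasure_mono) (auto simp: E_def)
    then show ?thesis using weak[OF that] by (meson mult_left_mono order_trans zero_le)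
  qed
  obtain c' where c: "c = ennreal c'" "c' \<ge> 0" using \<open>c \<noteq> \<top>\<close> by (cases c) auto
  obtain e where e: "emeasure M E = ennreal e" "e \<ge> 0"
    using bound[of 1] c by (cases "emeasure M E") (auto simp: top_unique)
  have "e = 0"
  proof (rule ccontr)
    assume "e \<noteq> 0"
    then have "(c' + 1) / e * e \<le> c'"
      using bound[of "(c' + 1) / e"] c e by (simp add: ennreal_mult'[symmetric])
    with \<open>e \<noteq> 0\<close> show False by simp
  qed
  then have "E \<in> null_sets M" using e by (simp add: null_sets_def)
  then show ?thesis by (rule AE_I') (auto simp: E_def)
qed

lemma enn2real_dyadic_max_weak_type:
  fixes t :: real
  assumes tree: "is_tree M T" and [measurable]: "\<phi> \<in> borel_measurable M"
    and finite: "AE x in M. dyadic_max M T \<phi> x \<noteq> \<top>" and "0 \<le> t"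
  defines "E \<equiv> {x\<in>space M. t < enn2real (dyadic_max M T \<phi> x)}"
  shows "ennreal t * emeasure M E \<le> (\<integral>\<^sup>+ x\<in>E. ennreal \<bar>\<phi> x\<bar> \<partial>M)"
proof -
  define E' where "E' = {x\<in>space M. ennreal t < dyadic_max M T \<phi> x}"
  have [measurable]: "dyadic_max M T \<phi> \<in> borel_measurable M"
    by (rule is_tree_borel_measurable_dyadic_max[OF tree])
  have less: "ennreal t < a" if "t < enn2real a" for a
    using that enn2real_leI[of t a] \<open>0 \<le> t\<close> by (meson not_le)
  have "E \<subseteq> E'" unfolding E_def E'_def by (auto intro: less)
  have less_iff: "ennreal t < a \<longleftrightarrow> t < enn2real a" if "a \<noteq> \<top>" for a
    using that \<open>0 \<le> t\<close> by (cases a) (auto simp: ennreal_less_iff)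
  have "AE x in M. indicator E' x = (indicator E x :: ennreal)"
    using finite unfolding E_def E'_def by (auto elim!: eventually_mono simp: indicator_def less_iff)
  have "ennreal t * emeasure M E \<le> ennreal t * emeasure M E'"
    using \<open>E \<subseteq> E'\<close> by (intro mult_left_mono emeasure_mono) (auto simp: E'_def)
  also have "\<dots> \<le> (\<integral>\<^sup>+ x\<in>E'. ennreal \<bar>\<phi> x\<bar> \<partial>M)"
    unfolding E'_def by (rule dyadic_max_weak_type[OF tree]) measurable
  also have "\<dots> = (\<integral>\<^sup>+ x\<in>E. ennreal \<bar>\<phi> x\<bar> \<partial>M)"
    using \<open>AE x in M. indicator E' x = (indicator E x :: ennreal)\<close>
    by (intro nn_integral_cong_AE) (auto elim!: eventually_mono)
  finally show ?thesis .
qed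

lemma AE_dyadic_max_finite:
  assumes tree: "is_tree M T" and [measurable]: "\<phi> \<in> borel_measurable M"
    and "(\<integral>\<^sup>+ x. ennreal \<bar>\<phi> x\<bar> \<partial>M) \<noteq> \<top>"
  shows "AE x in M. dyadic_max M T \<phi> x \<noteq> \<top>"
proof (rule AE_finite_of_weak_type)
  show "dyadic_max M T \<phi> \<in> borel_measurable M"
    by (rule is_tree_borel_measurable_dyadic_max[OF tree])
  fix t :: real
  have "ennreal t * emeasure M {x\<in>space M. ennreal t < dyadic_max M T \<phi> x}
      \<le> (\<integral>\<^sup>+ x\<in>{x\<in>space M. ennreal t < dyadic_max M T \<phi> x}. ennreal \<bar>\<phi> x\<bar> \<partial>M)"
    by (rule dyadic_max_weak_type[OF tree]) measurable
  also have "\<dots> \<le> (\<integral>\<^sup>+ x. ennreal \<bar>\<phi> x\<bar> \<partial>M)"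
    by (intro nn_integral_mono) (simp split: split_indicator)
  finally show "ennreal t * emeasure M {x\<in>space M. ennreal t < dyadic_max M T \<phi> x} \<le> (\<integral>\<^sup>+ x. ennreal \<bar>\<phi> x\<bar> \<partial>M)" .
qed fact

lemma AE_integral_abs_le_enn2real_dyadic_max:
  assumes M: "prob_space M" and tree: "is_tree M T" and "integrable M \<phi>"
  shows "AE x in M. (\<integral>y. \<bar>\<phi> y\<bar> \<partial>M) \<le> enn2real (dyadic_max M T \<phi> x)"
proof -
  have int: "(\<integral>\<^sup>+ y. ennreal \<bar>\<phi> y\<bar> \<partial>M) = ennreal (\<integral>y. \<bar>\<phi> y\<bar> \<partial>M)"
    using \<open>integrable M \<phi>\<close> by (simp add: nn_integral_eq_integral)
  have "AE x in M. dyadic_max M T \<phi> x \<noteq> \<top>"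
    using \<open>integrable M \<phi>\<close> int by (intro AE_dyadic_max_finite[OF tree]) auto
  then show ?thesis
    using AE_space
  proof eventually_elim
    case (elim x)
    then have "ennreal (\<integral>y. \<bar>\<phi> y\<bar> \<partial>M) \<le> dyadic_max M T \<phi> x"
      using nn_integral_abs_le_dyadic_max[OF M is_tree_space[OF tree]] int by metis
    with elim(1) show ?case by (cases "dyadic_max M T \<phi> x") auto
  qed
qed

lemma has_real_derivative_H_fun:
  assumes "0 < z"
  shows "(H_fun q has_real_derivative q * (1 - q) * (z powr (q - 1) - z powr (q - 2))) (at z)"
proof -
  have "(H_fun q has_real_derivative (1 - q) * (q * z powr (q - 1)) + q * ((q - 1) * z powr (q - 1 - 1))) (at z)"
    unfolding H_fun_def[abs_def] by (intro derivative_eq_intros has_real_derivative_powr assms) auto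
  then show ?thesis by (simp add: algebra_simps)
qed

lemma continuous_on_H_fun: "0 < a \<Longrightarrow> continuous_on {a..b} (H_fun q)"
  by (intro continuous_at_imp_continuous_on ballI DERIV_isCont) (auto intro: has_real_derivative_H_fun)

lemma H_fun_strict_mono:
  assumes "0 < q" "q < 1" "1 \<le> x" "x < y"
  shows "H_fun q x < H_fun q y"
proof (rule DERIV_pos_imp_increasing_open[OF \<open>x < y\<close>])
  fix z assume "x < z" "z < y"
  then have "1 < z" using assms by simp
  then have "z powr (q - 2) < z powr (q - 1)" by (intro powr_less_mono) auto
  then show "\<exists>D. (H_fun q has_real_derivative D) (at z) \<and> 0 < D"
    using has_real_derivative_H_fun[of z q] \<open>1 < z\<close> assms(1,2) by auto
qed (use assms in \<open>auto intro: continuous_on_H_fun\<close>)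

lemma omegaE:
  assumes q: "0 < q" "q < 1" and c: "1 \<le> c"
  obtains y where "1 \<le> y" "H_fun q y = c" "omega q c = y powr q"
proof -
  define b where "b = (c / (1 - q)) powr (1 / q)"
  have "1 \<le> c / (1 - q)" using q c by (simp add: field_simps)
  then have "1 \<le> b" "b powr q = c / (1 - q)"
    unfolding b_def using q by (auto simp: ge_one_powr_ge_zero powr_powr)
  then have "c \<le> H_fun q b" using q by (simp add: H_fun_def)
  moreover have "H_fun q 1 \<le> c" using c by (simp add: H_fun_def)
  ultimately obtain y where y: "1 \<le> y" "y \<le> b" "H_fun q y = c"
    using IVT'[of "H_fun q" 1 c b] \<open>1 \<le> b\<close> continuous_on_H_fun[of 1 b q] by auto
  have "y' = y" if "1 \<le> y'" "H_fun q y' = c" for y'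
    using H_fun_strict_mono[OF q, of y' y] H_fun_strict_mono[OF q, of y y'] that y
    by (cases y y' rule: linorder_cases) auto
  then have "(THE y. 1 \<le> y \<and> H_fun q y = c) = y" using y by blast
  then show ?thesis using that y unfolding omega_def by simp
qed

lemma powr_le_omega:
  assumes q: "0 < q" "q < 1" and "1 \<le> c" "0 < z" "H_fun q z \<le> c"
  shows "z powr q \<le> omega q c"
proof -
  obtain y where y: "1 \<le> y" "H_fun q y = c" "omega q c = y powr q"
    using omegaE[OF q \<open>1 \<le> c\<close>] .
  have "z \<le> y"
    using H_fun_strict_mono[OF q y(1), of z] assms(5) y(2) by (cases "z \<le> y") auto
  then show ?thesis using y(3) \<open>0 < z\<close> q by (simp add: powr_mono2)
qed

lemma powr_le_tangent:
  fixes p c q :: real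
  assumes q: "0 < q" "q < 1" and "0 < c" "0 \<le> p"
  shows "p powr q \<le> (1 - q) * c powr q + q * p * c powr (q - 1)"
proof (cases "p = 0")
  case False
  then have "0 < p" using \<open>0 \<le> p\<close> by simp
  have "(p * c powr (q - 1)) powr q * (c powr q) powr (1 - q) = p powr q * c powr ((q - 1) * q + q * (1 - q))"
    using \<open>0 < p\<close> \<open>0 < c\<close> by (simp add: powr_mult powr_powr powr_add)
  also have "\<dots> = p powr q" using \<open>0 < c\<close> by (simp add: algebra_simps)
  finally have "p powr q = (p * c powr (q - 1)) powr q * (c powr q) powr (1 - q)" ..
  also have "\<dots> \<le> q * (p * c powr (q - 1)) + (1 - q) * c powr q"
    by (rule Youngs_inequality_0) (use q \<open>0 < p\<close> \<open>0 < c\<close> in auto)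
  finally show ?thesis by (simp add: algebra_simps)
qed (use assms in simp)

lemma le_omega_of_moment_inequalities:
  fixes q h F I J :: real
  assumes q: "0 < q" "q < 1" and h: "0 < h" "h \<le> F" and "0 < I"
    and upper: "(1 - q) * I + q * J \<le> F"
    and tangent: "\<And>z. 0 < z \<Longrightarrow> h \<le> q * z powr (1 - q) * J + (1 - q) * z powr (- q) * I"
  shows "I \<le> h * omega q (F / h)"
proof -
  define z where "z = (I / h) powr (1 / q)"
  have "0 < z" using \<open>0 < I\<close> h unfolding z_def by simp
  have zq: "z powr q = I / h" using \<open>0 < I\<close> h q unfolding z_def by (simp add: powr_powr)
  have "z powr (- q) * I = h" using zq h \<open>0 < z\<close> by (simp add: powr_minus field_simps)
  then have "h \<le> q * z powr (1 - q) * J + (1 - q) * h"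
    using tangent[OF \<open>0 < z\<close>] by (simp add: mult.assoc)
  then have "h \<le> z powr (1 - q) * J" using q by (simp add: algebra_simps)
  then have "h * z powr (q - 1) \<le> z powr (1 - q) * J * z powr (q - 1)"
    by (rule mult_right_mono) simp
  also have "\<dots> = J * (z powr (1 - q) * z powr (q - 1))" by simp
  also have "z powr (1 - q) * z powr (q - 1) = 1" using \<open>0 < z\<close> by (simp add: powr_add[symmetric])
  finally have "h * z powr (q - 1) \<le> J" by simp
  have "h * H_fun q z = (1 - q) * (h * z powr q) + q * (h * z powr (q - 1))"
    by (simp add: H_fun_def algebra_simps)
  also have "\<dots> \<le> (1 - q) * I + q * J"
    using \<open>h * z powr (q - 1) \<le> J\<close> zq h q by simp
  also have "\<dots> \<le> F" by (rule upper)
  finally have "h * H_fun q z \<le> F" .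
  then have "z powr q \<le> omega q (F / h)"
    using h \<open>0 < z\<close> by (intro powr_le_omega q) (auto simp: field_simps)
  then show ?thesis using zq h by (simp add: field_simps)
qed

lemma nn_integral_FTC_Ioo:
  fixes F f :: "real \<Rightarrow> real"
  assumes "f \<in> borel_measurable borel" "a \<le> b"
    and "\<And>t. t \<in> {a..b} \<Longrightarrow> (F has_real_derivative f t) (at t)"
    and "\<And>t. t \<in> {a..b} \<Longrightarrow> 0 \<le> f t"
  shows "(\<integral>\<^sup>+ t. ennreal (f t) * indicator {a<..<b} t \<partial>lborel) = ennreal (F b - F a)"
proof -
  have "AE t in lborel. t \<noteq> a" "AE t in lborel. t \<noteq> b" by (rule AE_lborel_singleton)+
  then have "(\<integral>\<^sup>+ t. ennreal (f t) * indicator {a<..<b} t \<partial>lborel)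
      = (\<integral>\<^sup>+ t. ennreal (f t) * indicator {a..b} t \<partial>lborel)"
    by (intro nn_integral_cong_AE) (auto split: split_indicator)
  also have "\<dots> = ennreal (F b - F a)"
    using nn_integral_FTC_Icc[of f a b F] assms by (simp add: mult.commute)
  finally show ?thesis .
qed

text \<open>The derivatives of \<open>(1 - q) * t powr q\<close> and of \<open>- q * t powr (q - 1)\<close> are
  \<open>t * layer_kernel q t\<close> and \<open>layer_kernel q t\<close>: the extra factor \<open>t\<close> is exactly what the
  weak-type inequality \<open>t * \<mu> {g > t} \<le> \<integral>{g > t} \<phi>\<close> consumes inside the layer-cake formula.\<close>
definition layer_kernel :: "real \<Rightarrow> real \<Rightarrow> real" where
  "layer_kernel q t = q * (1 - q) * t powr (q - 2)"

lemma powr_eq_nn_integral_layer_kernel: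
  fixes q a b :: real
  assumes "0 < q" "q < 1" "0 < a" "a \<le> b"
  shows "ennreal ((1 - q) * b powr q)
    = ennreal ((1 - q) * a powr q) + (\<integral>\<^sup>+ t. ennreal (t * layer_kernel q t) * indicator {a<..<b} t \<partial>lborel)"
proof -
  have "t * layer_kernel q t = (1 - q) * (q * t powr (q - 1))" if "0 < t" for t
    using that by (simp add: layer_kernel_def powr_diff field_simps power2_eq_square)
  then have "((\<lambda>t. (1 - q) * t powr q) has_real_derivative t * layer_kernel q t) (at t)" if "0 < t" for t
    using DERIV_cmult[OF has_real_derivative_powr[OF that, of q], of "1 - q"] that by simp
  then have "(\<integral>\<^sup>+ t. ennreal (t * layer_kernel q t) * indicator {a<..<b} t \<partial>lborel)
      = ennreal ((1 - q) * b powr q - (1 - q) * a powr q)"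
    using assms by (intro nn_integral_FTC_Ioo) (auto simp: layer_kernel_def[abs_def])
  moreover have "(1 - q) * a powr q \<le> (1 - q) * b powr q"
    using assms by (intro mult_left_mono powr_mono2) auto
  ultimately show ?thesis using assms by (simp add: ennreal_plus[symmetric] del: ennreal_plus)
qed

lemma powr_neg_eq_nn_integral_layer_kernel:
  fixes q a b :: real
  assumes "0 < q" "q < 1" "0 < a" "a \<le> b"
  shows "ennreal (q * a powr (q - 1))
    = ennreal (q * b powr (q - 1)) + (\<integral>\<^sup>+ t. ennreal (layer_kernel q t) * indicator {a<..<b} t \<partial>lborel)"
proof -
  have "((\<lambda>t. - (q * t powr (q - 1))) has_real_derivative layer_kernel q t) (at t)" if "0 < t" for t
    using DERIV_minus[OF DERIV_cmult[OF has_real_derivative_powr[OF that, of "q - 1"], of q]]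
    by (simp add: layer_kernel_def algebra_simps)
  then have "(\<integral>\<^sup>+ t. ennreal (layer_kernel q t) * indicator {a<..<b} t \<partial>lborel)
      = ennreal (q * a powr (q - 1) - q * b powr (q - 1))"
    using assms by (subst nn_integral_FTC_Ioo[where F = "\<lambda>t. - (q * t powr (q - 1))"])
      (auto simp: layer_kernel_def[abs_def])
  moreover have "q * b powr (q - 1) \<le> q * a powr (q - 1)"
    using assms by (intro mult_left_mono powr_mono2') auto
  ultimately show ?thesis using assms by (simp add: ennreal_plus[symmetric] del: ennreal_plus)
qed

lemma nn_integral_layer_le_of_weak_type:
  fixes f :: real and g \<phi> :: "'a \<Rightarrow> real" and k :: "real \<Rightarrow> real"
  assumes "sigma_finite_measure M" "0 \<le> f"
    and [measurable]: "g \<in> borel_measurable M" "\<phi> \<in> borel_measurable M" "k \<in> borel_measurable borel"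
    and k_nonneg: "\<And>t. 0 \<le> k t"
    and weak: "\<And>t. f < t \<Longrightarrow> ennreal t * emeasure M {x\<in>space M. t < g x}
      \<le> (\<integral>\<^sup>+ x\<in>{x\<in>space M. t < g x}. ennreal (\<phi> x) \<partial>M)"
  shows "(\<integral>\<^sup>+ x. (\<integral>\<^sup>+ t. ennreal (t * k t) * indicator {f<..<g x} t \<partial>lborel) \<partial>M)
    \<le> (\<integral>\<^sup>+ x. ennreal (\<phi> x) * (\<integral>\<^sup>+ t. ennreal (k t) * indicator {f<..<g x} t \<partial>lborel) \<partial>M)"
proof -
  interpret P: pair_sigma_finite M lborel
    by (simp add: pair_sigma_finite_def assms(1) lborel.sigma_finite_measure_axioms)
  have tk_meas: "(\<lambda>(x, t). ennreal (t * k t) * indicator {f<..<g x} t) \<in> borel_measurable (M \<Otimes>\<^sub>M lborel)"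
    and \<phi>k_meas: "(\<lambda>(x, t). ennreal (\<phi> x) * (ennreal (k t) * indicator {f<..<g x} t)) \<in> borel_measurable (M \<Otimes>\<^sub>M lborel)"
    unfolding indicator_def greaterThanLessThan_iff by measurable
  have k_meas: "(\<lambda>t. ennreal (k t) * indicator {f<..<g x} t) \<in> borel_measurable lborel" for x
    unfolding indicator_def greaterThanLessThan_iff by measurable
  have "(\<integral>\<^sup>+ x. (\<integral>\<^sup>+ t. ennreal (t * k t) * indicator {f<..<g x} t \<partial>lborel) \<partial>M)
      = (\<integral>\<^sup>+ t. (\<integral>\<^sup>+ x. ennreal (t * k t) * indicator {f<..<g x} t \<partial>M) \<partial>lborel)"
    by (rule P.Fubini'[OF tk_meas, symmetric])
  also have "\<dots> \<le> (\<integral>\<^sup>+ t. (\<integral>\<^sup>+ x. ennreal (\<phi> x) * (ennreal (k t) * indicator {f<..<g x} t) \<partial>M) \<partial>lborel)"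
  proof (rule nn_integral_mono)
    fix t :: real
    show "(\<integral>\<^sup>+ x. ennreal (t * k t) * indicator {f<..<g x} t \<partial>M)
      \<le> (\<integral>\<^sup>+ x. ennreal (\<phi> x) * (ennreal (k t) * indicator {f<..<g x} t) \<partial>M)"
    proof (cases "f < t")
      case True
      have "(\<integral>\<^sup>+ x. ennreal (t * k t) * indicator {f<..<g x} t \<partial>M)
          = (\<integral>\<^sup>+ x. ennreal (t * k t) * indicator {x\<in>space M. t < g x} x \<partial>M)"
        using True by (intro nn_integral_cong) (simp add: indicator_def)
      also have "\<dots> = ennreal (t * k t) * emeasure M {x\<in>space M. t < g x}"
        by (rule nn_integral_cmult_indicator) measurable
      also have "\<dots> = ennreal (k t) * (ennreal t * emeasure M {x\<in>space M. t < g x})"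
        using True \<open>0 \<le> f\<close> k_nonneg[of t] by (simp add: ennreal_mult mult_ac)
      also have "\<dots> \<le> ennreal (k t) * (\<integral>\<^sup>+ x\<in>{x\<in>space M. t < g x}. ennreal (\<phi> x) \<partial>M)"
        by (intro mult_left_mono weak True) simp
      also have "\<dots> = (\<integral>\<^sup>+ x. ennreal (\<phi> x) * (ennreal (k t) * indicator {f<..<g x} t) \<partial>M)"
        using True by (subst nn_integral_cmult[symmetric])
          (auto intro!: nn_integral_cong simp: indicator_def mult.commute)
      finally show ?thesis .
    next
      case False
      then show ?thesis by (simp add: indicator_def)
    qed
  qed
  also have "\<dots> = (\<integral>\<^sup>+ x. ennreal (\<phi> x) * (\<integral>\<^sup>+ t. ennreal (k t) * indicator {f<..<g x} t \<partial>lborel) \<partial>M)"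
    unfolding P.Fubini'[OF \<phi>k_meas] by (intro nn_integral_cong nn_integral_cmult k_meas)
  finally show ?thesis .
qed

lemma nn_integral_powr_le_of_weak_type:
  fixes f q :: real and g \<phi> :: "'a \<Rightarrow> real"
  assumes M: "prob_space M" and q: "0 < q" "q < 1" and "0 < f"
    and [measurable]: "g \<in> borel_measurable M" "\<phi> \<in> borel_measurable M"
    and g_ge: "AE x in M. f \<le> g x"
    and \<phi>_int: "(\<integral>\<^sup>+ x. ennreal (\<phi> x) \<partial>M) = ennreal f"
    and weak: "\<And>t. f < t \<Longrightarrow> ennreal t * emeasure M {x\<in>space M. t < g x}
      \<le> (\<integral>\<^sup>+ x\<in>{x\<in>space M. t < g x}. ennreal (\<phi> x) \<partial>M)"
  shows "ennreal (1 - q) * (\<integral>\<^sup>+ x. ennreal (g x powr q) \<partial>M)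
    + ennreal q * (\<integral>\<^sup>+ x. ennreal (\<phi> x * g x powr (q - 1)) \<partial>M) \<le> ennreal (f powr q)"
proof -
  interpret prob_space M by (rule M)
  define L where "L x = (\<integral>\<^sup>+ t. ennreal (t * layer_kernel q t) * indicator {f<..<g x} t \<partial>lborel)" for x
  define K where "K x = (\<integral>\<^sup>+ t. ennreal (layer_kernel q t) * indicator {f<..<g x} t \<partial>lborel)" for x
  have [measurable]: "L \<in> borel_measurable M" "K \<in> borel_measurable M"
    unfolding L_def K_def indicator_def greaterThanLessThan_iff layer_kernel_def
    by (rule lborel.borel_measurable_nn_integral, measurable)+
  have tail: "ennreal (\<phi> x) * K x + ennreal q * ennreal (\<phi> x * g x powr (q - 1))
      = ennreal (\<phi> x) * ennreal (q * f powr (q - 1))" if "f \<le> g x" for x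
  proof (cases "0 \<le> \<phi> x")
    case True
    then show ?thesis
      using powr_neg_eq_nn_integral_layer_kernel[OF q \<open>0 < f\<close> that] q unfolding K_def
      by (auto simp: ennreal_mult'[symmetric] distrib_left mult_ac)
  qed (simp add: ennreal_neg mult_nonpos_nonneg)
  have "ennreal (1 - q) * (\<integral>\<^sup>+ x. ennreal (g x powr q) \<partial>M) = (\<integral>\<^sup>+ x. ennreal ((1 - q) * g x powr q) \<partial>M)"
    using q by (simp add: nn_integral_cmult[symmetric] ennreal_mult)
  also have "\<dots> = (\<integral>\<^sup>+ x. ennreal ((1 - q) * f powr q) + L x \<partial>M)"
    using g_ge q \<open>0 < f\<close> unfolding L_def
    by (intro nn_integral_cong_AE) (auto elim!: eventually_mono intro: powr_eq_nn_integral_layer_kernel)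
  also have "\<dots> = ennreal ((1 - q) * f powr q) + (\<integral>\<^sup>+ x. L x \<partial>M)"
    by (simp add: nn_integral_add emeasure_space_1)
  also have "(\<integral>\<^sup>+ x. L x \<partial>M) \<le> (\<integral>\<^sup>+ x. ennreal (\<phi> x) * K x \<partial>M)"
    unfolding L_def K_def using \<open>0 < f\<close> q
    by (intro nn_integral_layer_le_of_weak_type weak prob_space_imp_sigma_finite[OF M])
      (auto simp: layer_kernel_def)
  finally have "ennreal (1 - q) * (\<integral>\<^sup>+ x. ennreal (g x powr q) \<partial>M)
      + ennreal q * (\<integral>\<^sup>+ x. ennreal (\<phi> x * g x powr (q - 1)) \<partial>M)
      \<le> ennreal ((1 - q) * f powr q) + ((\<integral>\<^sup>+ x. ennreal (\<phi> x) * K x \<partial>M)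
      + ennreal q * (\<integral>\<^sup>+ x. ennreal (\<phi> x * g x powr (q - 1)) \<partial>M))"
    by (simp add: add.assoc add_right_mono add_left_mono)
  also have "(\<integral>\<^sup>+ x. ennreal (\<phi> x) * K x \<partial>M) + ennreal q * (\<integral>\<^sup>+ x. ennreal (\<phi> x * g x powr (q - 1)) \<partial>M)
      = (\<integral>\<^sup>+ x. ennreal (\<phi> x) * K x + ennreal q * ennreal (\<phi> x * g x powr (q - 1)) \<partial>M)"
    by (simp add: nn_integral_add nn_integral_cmult)
  also have "\<dots> = (\<integral>\<^sup>+ x. ennreal (\<phi> x) * ennreal (q * f powr (q - 1)) \<partial>M)"
    using g_ge by (intro nn_integral_cong_AE) (auto elim!: eventually_mono intro: tail)
  also have "\<dots> = ennreal (q * f powr q)"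
    using \<open>0 < f\<close> q by (simp add: nn_integral_multc \<phi>_int ennreal_mult[symmetric] powr_diff field_simps)
  also have "ennreal ((1 - q) * f powr q) + ennreal (q * f powr q) = ennreal (f powr q)"
    by (subst ennreal_plus[symmetric]) (use q in \<open>auto simp: algebra_simps mult_left_le_one_le\<close>)
  finally show ?thesis .
qed

lemma nn_integral_powr_le_tangent:
  fixes q z :: real and g \<phi> :: "'a \<Rightarrow> real"
  assumes q: "0 < q" "q < 1" and "0 < z"
    and [measurable]: "g \<in> borel_measurable M" "\<phi> \<in> borel_measurable M"
    and pos: "AE x in M. 0 \<le> \<phi> x \<and> 0 < g x"
  shows "(\<integral>\<^sup>+ x. ennreal (\<phi> x powr q) \<partial>M)
    \<le> ennreal ((1 - q) * z powr (- q)) * (\<integral>\<^sup>+ x. ennreal (g x powr q) \<partial>M)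
      + ennreal (q * z powr (1 - q)) * (\<integral>\<^sup>+ x. ennreal (\<phi> x * g x powr (q - 1)) \<partial>M)"
proof -
  have "\<phi> x powr q \<le> (1 - q) * z powr (- q) * g x powr q + q * z powr (1 - q) * (\<phi> x * g x powr (q - 1))"
    if "0 \<le> \<phi> x" "0 < g x" for x
  proof -
    have "\<phi> x powr q \<le> (1 - q) * (g x / z) powr q + q * \<phi> x * (g x / z) powr (q - 1)"
      using that q \<open>0 < z\<close> by (intro powr_le_tangent) auto
    also have "\<dots> = (1 - q) * z powr (- q) * g x powr q + q * z powr (1 - q) * (\<phi> x * g x powr (q - 1))"
      using that \<open>0 < z\<close> by (simp add: powr_divide powr_minus_divide powr_diff field_simps)
    finally show ?thesis .
  qed
  then have "(\<integral>\<^sup>+ x. ennreal (\<phi> x powr q) \<partial>M) \<le> (\<integral>\<^sup>+ x. ennreal ((1 - q) * z powr (- q)) * ennreal (g x powr q)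
      + ennreal (q * z powr (1 - q)) * ennreal (\<phi> x * g x powr (q - 1)) \<partial>M)"
    using pos q \<open>0 < z\<close> by (intro nn_integral_mono_AE, elim eventually_mono)
      (auto simp: ennreal_mult[symmetric] ennreal_plus[symmetric] simp del: ennreal_plus)
  also have "\<dots> = ennreal ((1 - q) * z powr (- q)) * (\<integral>\<^sup>+ x. ennreal (g x powr q) \<partial>M)
      + ennreal (q * z powr (1 - q)) * (\<integral>\<^sup>+ x. ennreal (\<phi> x * g x powr (q - 1)) \<partial>M)"
    by (simp add: nn_integral_add nn_integral_cmult)
  finally show ?thesis .
qed

lemma nn_integral_powr_le_omega_of_weak_type:
  fixes f h q :: real and g \<phi> :: "'a \<Rightarrow> real"
  assumes M: "prob_space M" and q: "0 < q" "q < 1" and h: "0 < h" "h \<le> f powr q"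
    and \<phi>: "integrable M \<phi>" "AE x in M. 0 \<le> \<phi> x" "integral\<^sup>L M \<phi> = f"
      "integral\<^sup>L M (\<lambda>x. \<phi> x powr q) = h"
    and [measurable]: "g \<in> borel_measurable M" and g_ge: "AE x in M. f \<le> g x"
    and weak: "\<And>t. f < t \<Longrightarrow> ennreal t * emeasure M {x\<in>space M. t < g x}
      \<le> (\<integral>\<^sup>+ x\<in>{x\<in>space M. t < g x}. ennreal (\<phi> x) \<partial>M)"
  shows "(\<integral>\<^sup>+ x. ennreal (g x powr q) \<partial>M) \<le> ennreal (h * omega q (f powr q / h))"
proof -
  interpret prob_space M by (rule M)
  have [measurable]: "\<phi> \<in> borel_measurable M" using \<phi>(1) by auto
  have "0 \<le> f" using integral_nonneg_AE[OF \<phi>(2)] \<phi>(3) by simp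
  moreover have "f \<noteq> 0" using h by auto
  ultimately have "0 < f" by simp
  define A where "A = (\<integral>\<^sup>+ x. ennreal (g x powr q) \<partial>M)"
  define B where "B = (\<integral>\<^sup>+ x. ennreal (\<phi> x * g x powr (q - 1)) \<partial>M)"
  have "(\<integral>\<^sup>+ x. ennreal (\<phi> x) \<partial>M) = ennreal f"
    using \<phi> by (simp add: nn_integral_eq_integral)
  then have upper: "ennreal (1 - q) * A + ennreal q * B \<le> ennreal (f powr q)"
    unfolding A_def B_def
    using nn_integral_powr_le_of_weak_type[OF M q \<open>0 < f\<close> _ _ g_ge _ weak] by simp
  then have "A \<noteq> \<top>" "B \<noteq> \<top>" using q by (auto simp: ennreal_mult_eq_top_iff top_unique)
  then obtain I J where I: "A = ennreal I" "0 \<le> I" and J: "B = ennreal J" "0 \<le> J"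
    by (cases A; cases B) auto
  have "ennreal (f powr q) = (\<integral>\<^sup>+ x. ennreal (f powr q) \<partial>M)" by (simp add: emeasure_space_1)
  also have "\<dots> \<le> A"
    unfolding A_def using g_ge \<open>0 < f\<close> q
    by (intro nn_integral_mono_AE) (auto elim!: eventually_mono intro: powr_mono2)
  finally have "f powr q \<le> I" using I by simp
  then have "0 < I" using \<open>0 < f\<close> powr_gt_zero[of f q] by linarith
  have "(1 - q) * I + q * J \<le> f powr q"
    using upper I J q by (simp add: ennreal_mult[symmetric] ennreal_plus[symmetric] del: ennreal_plus)
  moreover have "h \<le> q * z powr (1 - q) * J + (1 - q) * z powr (- q) * I" if "0 < z" for z
  proof -
    have "integrable M (\<lambda>x. \<phi> x powr q)"
      using \<phi>(4) h(1) not_integrable_integral_eq by fastforce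
    then have "ennreal h = (\<integral>\<^sup>+ x. ennreal (\<phi> x powr q) \<partial>M)"
      using \<phi>(4) by (simp add: nn_integral_eq_integral)
    also have "\<dots> \<le> ennreal ((1 - q) * z powr (- q)) * A + ennreal (q * z powr (1 - q)) * B"
      unfolding A_def B_def using AE_conjI[OF \<phi>(2) g_ge] \<open>0 < f\<close>
      by (intro nn_integral_powr_le_tangent q \<open>0 < z\<close>) (auto elim: eventually_mono)
    finally show ?thesis
      using I J q \<open>0 < z\<close>
      by (simp add: ennreal_mult[symmetric] ennreal_plus[symmetric] add.commute del: ennreal_plus)
  qed
  ultimately have "I \<le> h * omega q (f powr q / h)"
    using q h \<open>0 < I\<close> by (intro le_omega_of_moment_inequalities) auto
  then show ?thesis using I unfolding A_def by simp
qed

theorem lemma3p1: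
  fixes M :: "'a measure" and T :: "'a set set" and q f h :: real and \<phi> :: "'a \<Rightarrow> real"
  assumes "prob_space M" and "non_atomic M" and "is_tree M T"
    and "0 < q" and "q < 1"
    and "0 < h" and "h \<le> f powr q"
    and "integrable M \<phi>" and "AE x in M. \<phi> x \<ge> 0"
    and "integral\<^sup>L M \<phi> = f"
    and "integral\<^sup>L M (\<lambda>x. \<phi> x powr q) = h"
  shows "(\<integral>\<^sup>+ x. enn_powr (dyadic_max M T \<phi> x) q \<partial>M) \<le> ennreal (h * omega q (f powr q / h))"
proof -
  note tree = \<open>is_tree M T\<close>
  define g where "g x = enn2real (dyadic_max M T \<phi> x)" for x
  have [measurable]: "\<phi> \<in> borel_measurable M" using \<open>integrable M \<phi>\<close> by auto
  have [measurable]: "g \<in> borel_measurable M"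
    unfolding g_def using is_tree_borel_measurable_dyadic_max[OF tree] by measurable
  have int_abs: "(\<integral>x. \<bar>\<phi> x\<bar> \<partial>M) = f" "(\<integral>x. \<bar>\<phi> x\<bar> powr q \<partial>M) = h"
    unfolding assms(10,11)[symmetric] using \<open>AE x in M. \<phi> x \<ge> 0\<close>
    by (intro integral_cong_AE; auto elim: eventually_mono)+
  have finite: "AE x in M. dyadic_max M T \<phi> x \<noteq> \<top>"
    using \<open>integrable M \<phi>\<close> by (intro AE_dyadic_max_finite[OF tree]) (auto simp: integrable_iff_bounded)
  have "0 \<le> f" unfolding int_abs(1)[symmetric] by (rule Bochner_Integration.integral_nonneg) simp
  have weak: "ennreal t * emeasure M {x\<in>space M. t < g x} \<le> (\<integral>\<^sup>+ x\<in>{x\<in>space M. t < g x}. ennreal \<bar>\<phi> x\<bar> \<partial>M)"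
    if "f < t" for t
    unfolding g_def using finite that \<open>0 \<le> f\<close> by (intro enn2real_dyadic_max_weak_type[OF tree]) simp_all
  have "(\<integral>\<^sup>+ x. ennreal (g x powr q) \<partial>M) \<le> ennreal (h * omega q (f powr q / h))"
    using AE_integral_abs_le_enn2real_dyadic_max[OF assms(1) tree \<open>integrable M \<phi>\<close>] int_abs
    unfolding g_def[symmetric]
    by (intro nn_integral_powr_le_omega_of_weak_type[OF assms(1,4-7) integrable_abs[OF assms(8)]] weak) simp_all
  moreover have "(\<integral>\<^sup>+ x. enn_powr (dyadic_max M T \<phi> x) q \<partial>M) = (\<integral>\<^sup>+ x. ennreal (g x powr q) \<partial>M)"
    using finite by (intro nn_integral_cong_AE) (auto elim!: eventually_mono simp: enn_powr_def g_def)
  ultimately show ?thesis by simp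
qed

end
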